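(* There exists a constant $C=C(d)$ such that for every $\omega\in\Omega$, $(x,t)\in\mathbb R^{d+1}$, $n\in\mathbb Z$ and $u\in S(G_n(x,t),\omega)$, $$\inf_{\partial_pG_n(x,t)}u\le\inf_{G_n(x,t)}u+C\,3^{2n}\mu(G_n(x,t),\omega)^{1/(d+1)}.$$
   Context: $\Omega$ is a set of functions $F:\mathbb S^d\times\mathbb R^{d+1}\to\mathbb R$ ($\mathbb S^d$ = real symmetric $d\times d$ matrices), written $F(M,y,s,\omega)$, each uniformly elliptic: $\mathcal M^-(M-N)\le F(M,y,s,\omega)-F(N,y,s,\omega)\le\mathcal M^+(M-N)$ with Pucci operators $\mathcal M^\pm$ for constants $0<\lambda\le\Lambda$, and with $F(M,\cdot,\cdot,\omega)$ bounded and continuous. For $Q=Q'\times(t_1,t_2]$, $\partial_pQ=(Q'\times\{t_1\})\cup(\partial Q'\times[t_1,t_2))$. $S(Q,\omega)$ is the set of $u\in C(Q)$ with $u_t+F(D^2u,x,t,\omega)\ge0$ in $Q$ in the viscosity sense. Monotone envelope on $Q$: $\Gamma^u(x,t)=\sup\{p\cdot x+h: p\cdot y+h\le u(y,s)\ \forall (y,s)\in Q,\ s\le t\}$. Parabolic subdifferential: $\mathcal P((x_0,t_0);w)=\{(p,h):\min_{(x,s)\in Q,s\le t_0}(w(x,s)-p\cdot x)=w(x_0,t_0)-p\cdot x_0=h\}$, $\mathcal P(E;w)=\bigcup_{(x_0,t_0)\in E}\mathcal P((x_0,t_0);w)$. $\mu(Q,\omega)=|Q|^{-1}\sup\{|\mathcal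 P(Q;\Gamma^u)|:u\in S(Q,\omega)\}$ with $|\cdot|$ Lebesgue measure on $\mathbb R^{d+1}$. $G_n=[-\tfrac12 3^n,\tfrac12 3^n)^d\times(0,3^{2n}]$ and $G_n(x,t)=(3^n\lfloor3^{-n}x+\tfrac12\rfloor,3^{2n}\lfloor3^{-2n}t\rfloor)+G_n$ (floor taken componentwise). *)

theory Defs
  imports "HOL-Analysis.Analysis"
begin

(* Space-time points are pairs (x,t) :: real^'n * real; d = CARD('n).
   Matrices are real^'n^'n; S^d = symmetric ones. *)

type_synonym 'n mat = "real^'n^'n"
type_synonym 'n coeff = "'n mat \<Rightarrow> real^'n \<Rightarrow> real \<Rightarrow> real"

definition symm :: "'n::finite mat \<Rightarrow> bool" where
  "symm M \<longleftrightarrow> transpose M = M"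

definition ell_mat :: "real \<Rightarrow> real \<Rightarrow> 'n::finite mat \<Rightarrow> bool" where
  "ell_mat lam Lam A \<longleftrightarrow> symm A \<and>
     (\<forall>\<xi>::real^'n. lam * (\<xi> \<bullet> \<xi>) \<le> \<xi> \<bullet> (A *v \<xi>) \<and> \<xi> \<bullet> (A *v \<xi>) \<le> Lam * (\<xi> \<bullet> \<xi>))"

definition pucci_plus :: "real \<Rightarrow> real \<Rightarrow> 'n::finite mat \<Rightarrow> real" where
  "pucci_plus lam Lam M = Sup {- trace (A ** M) | A. ell_mat lam Lam A}"

definition pucci_minus :: "real \<Rightarrow> real \<Rightarrow> 'n::finite mat \<Rightarrow> real" where
  "pucci_minus lam Lam M = Inf {- trace (A ** M) | A. ell_mat lam Lam A}"

definition Omega :: "real \<Rightarrow> real \<Rightarrow> ('n::finite coeff) set" where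
  "Omega lam Lam = {F.
     (\<forall>M N y s. symm M \<longrightarrow> symm N \<longrightarrow>
        pucci_minus lam Lam (M - N) \<le> F M y s - F N y s \<and>
        F M y s - F N y s \<le> pucci_plus lam Lam (M - N)) \<and>
     (\<forall>M. symm M \<longrightarrow> bounded (range (\<lambda>(y,s). F M y s)) \<and>
                     continuous_on UNIV (\<lambda>(y,s). F M y s))}"

definition cyl :: "(real^'n::finite) set \<Rightarrow> real \<Rightarrow> real \<Rightarrow> ((real^'n) \<times> real) set" where
  "cyl Q' t1 t2 = Q' \<times> {t1<..t2}"

definition par_bdry :: "(real^'n::finite) set \<Rightarrow> real \<Rightarrow> real \<Rightarrow> ((real^'n) \<times> real) set" where
  "par_bdry Q' t1 t2 = (Q' \<times> {t1}) \<union> (frontier Q' \<times> {t1..<t2})"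

(* Parabolic second-order subjet (Crandall-Ishii-Lions P^{2,-}) of u at (x0,t0):
   u(x,t) >= u(x0,t0) + p.(x-x0) + 1/2 (x-x0).X(x-x0) + b (t-t0) + o(|x-x0|^2+|t-t0|) *)
definition par_subjet :: "((real^'n::finite) \<times> real \<Rightarrow> real) \<Rightarrow> real^'n \<Rightarrow> real
      \<Rightarrow> real \<Rightarrow> real^'n \<Rightarrow> 'n mat \<Rightarrow> bool" where
  "par_subjet u x0 t0 b p X \<longleftrightarrow>
     (\<forall>e>0. \<exists>\<delta>>0. \<forall>x t. dist (x,t) (x0,t0) < \<delta> \<longrightarrow>
        u (x,t) \<ge> u (x0,t0) + p \<bullet> (x - x0) + (1/2) * ((x - x0) \<bullet> (X *v (x - x0)))
                  + b * (t - t0) - e * (norm (x - x0)^2 + \<bar>t - t0\<bar>))"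

(* u_t + F(D^2u,x,t) >= 0 in the viscosity sense in (the interior of) Q *)
definition visc_super :: "'n::finite coeff \<Rightarrow> ((real^'n) \<times> real) set
      \<Rightarrow> ((real^'n) \<times> real \<Rightarrow> real) \<Rightarrow> bool" where
  "visc_super F Q u \<longleftrightarrow>
     (\<forall>x0 t0 b p X. (x0,t0) \<in> interior Q \<longrightarrow> symm X \<longrightarrow> par_subjet u x0 t0 b p X
        \<longrightarrow> b + F X x0 t0 \<ge> 0)"

definition Ssup :: "((real^'n::finite) \<times> real) set \<Rightarrow> 'n coeff \<Rightarrow> ((real^'n) \<times> real \<Rightarrow> real) set" where
  "Ssup Q F = {u. continuous_on (closure Q) u \<and> visc_super F Q u}"

definition mon_env :: "((real^'n::finite) \<times> real) set \<Rightarrow> ((real^'n) \<times> real \<Rightarrow> real)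
      \<Rightarrow> (real^'n) \<times> real \<Rightarrow> real" where
  "mon_env Q u = (\<lambda>(x,t). Sup {p \<bullet> x + h | p h.
       \<forall>y s. (y,s) \<in> Q \<longrightarrow> s \<le> t \<longrightarrow> p \<bullet> y + h \<le> u (y,s)})"

definition par_subdiff :: "((real^'n::finite) \<times> real) set \<Rightarrow> (real^'n) \<times> real
      \<Rightarrow> ((real^'n) \<times> real \<Rightarrow> real) \<Rightarrow> ((real^'n) \<times> real) set" where
  "par_subdiff Q z w = (case z of (x0,t0) \<Rightarrow>
     {(p,h). (x0,t0) \<in> Q \<and> h = w (x0,t0) - p \<bullet> x0 \<and>
             (\<forall>x s. (x,s) \<in> Q \<longrightarrow> s \<le> t0 \<longrightarrow> w (x0,t0) - p \<bullet> x0 \<le> w (x,s) - p \<bullet> x)})"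

definition par_subdiff_set :: "((real^'n::finite) \<times> real) set \<Rightarrow> ((real^'n) \<times> real) set
      \<Rightarrow> ((real^'n) \<times> real \<Rightarrow> real) \<Rightarrow> ((real^'n) \<times> real) set" where
  "par_subdiff_set Q E w = (\<Union>z\<in>E. par_subdiff Q z w)"

definition leb_outer :: "('a::euclidean_space) set \<Rightarrow> ereal" where
  "leb_outer S = enn2ereal (INF T\<in>{T \<in> sets lebesgue. S \<subseteq> T}. emeasure lebesgue T)"

definition mu :: "((real^'n::finite) \<times> real) set \<Rightarrow> 'n coeff \<Rightarrow> ereal" where
  "mu Q F = ereal (1 / measure lebesgue Q) *
     (SUP u\<in>Ssup Q F. leb_outer (par_subdiff_set Q Q (mon_env Q u)))"

definition Gcenter :: "int \<Rightarrow> real^'n::finite \<Rightarrow> real^'n" where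
  "Gcenter n x = (\<chi> i. 3 powi n * of_int \<lfloor>x $ i / 3 powi n + 1/2\<rfloor>)"

definition Gtime :: "int \<Rightarrow> real \<Rightarrow> real" where
  "Gtime n t = 3 powi (2*n) * of_int \<lfloor>t / 3 powi (2*n)\<rfloor>"

definition Gsp :: "int \<Rightarrow> real^'n::finite \<Rightarrow> (real^'n) set" where
  "Gsp n x = {y. \<forall>i. - (1/2) * 3 powi n \<le> y $ i - Gcenter n x $ i \<and>
                        y $ i - Gcenter n x $ i < (1/2) * 3 powi n}"

definition Gcyl :: "int \<Rightarrow> (real^'n::finite) \<times> real \<Rightarrow> ((real^'n) \<times> real) set" where
  "Gcyl n z = (case z of (x,t) \<Rightarrow> cyl (Gsp n x) (Gtime n t) (Gtime n t + 3 powi (2*n)))"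

definition Gpar_bdry :: "int \<Rightarrow> (real^'n::finite) \<times> real \<Rightarrow> ((real^'n) \<times> real) set" where
  "Gpar_bdry n z = (case z of (x,t) \<Rightarrow> par_bdry (Gsp n x) (Gtime n t) (Gtime n t + 3 powi (2*n)))"

end

theory Submission
  imports Defs
begin

text \<open>
  Only continuity of u enters; the supersolution property is irrelevant, because u itself
  competes in the supremum defining mu. Let m be the infimum of u over the cylinder Q of
  side r and height r^2, and M > 0 the amount by which the infimum over the parabolic
  boundary exceeds m. An affine function p \<bullet> x + h with slope |p_i| < M/(4 d r) varies
  by at most M/8 over the cube, so if its value at the centre lies between m + M/4 and
  m + M/2, it is below u somewhere in Q and strictly below u on the closure of Q outside Q.
  Raising it until it first touches u, the earliest touching time is attained in Q and the
  plane then lies below u at all earlier times, so (p, h) belongs to the parabolic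
  subdifferential of the monotone envelope. These (p, h) fill a set of measure
  (M/4) (M/(2 d r))^d, hence mu \<ge> c_d M^(d+1) / r^(2(d+1)), i.e. M \<le> C r^2 mu^(1/(d+1)).
\<close>

lemma continuous_on_ge_from_the_past:
  fixes f :: "'a::topological_space \<times> real \<Rightarrow> real"
  assumes cont: "continuous_on K f" and yK: "(y,s) \<in> K" and as: "a < s"
    and past: "\<And>s'. a < s' \<Longrightarrow> s' < s \<Longrightarrow> (y,s') \<in> K \<and> v \<le> f (y,s')"
  shows "v \<le> f (y,s)"
proof -
  define a' where "a' = (a+s)/2"
  have a': "a < a'" "a' < s" using as by (auto simp: a'_def)
  have "Pair y ` {a'..s} \<subseteq> K" using yK past a' by (force simp: le_less)
  then have "continuous_on {a'..s} (\<lambda>s'. f (y,s'))"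
    by (intro continuous_on_compose2[OF cont]) (intro continuous_intros)
  then have "((\<lambda>s'. f (y,s')) \<longlongrightarrow> f (y,s)) (at s within {a'..s})"
    using a' by (simp add: continuous_on_def)
  then have "((\<lambda>s'. f (y,s')) \<longlongrightarrow> f (y,s)) (at_left s)"
    by (simp add: at_within_Icc_at_left[OF a'(2)])
  moreover have "\<forall>\<^sub>F s' in at_left s. v \<le> f (y,s')"
    using eventually_at_left_real[OF as] past by (auto elim!: eventually_mono)
  ultimately show ?thesis by (rule tendsto_lowerbound) simp
qed

lemma closure_cyl:
  assumes "t1 < t2"
  shows "closure (cyl Q' t1 t2) = closure Q' \<times> {t1..t2}"
  using assms by (simp add: cyl_def closure_Times)

lemma par_bdry_subset_closure_cyl:
  assumes "t1 < t2"
  shows "par_bdry Q' t1 t2 \<subseteq> closure (cyl Q' t1 t2)"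
  using assms closure_subset[of Q'] frontier_def[of Q']
  by (auto simp: closure_cyl par_bdry_def)

lemma Inf_par_bdry_le_off_cyl:
  fixes u :: "(real^'n::finite) \<times> real \<Rightarrow> real"
  assumes bdd: "bounded Q'" and tt: "t1 < t2"
    and cont: "continuous_on (closure (cyl Q' t1 t2)) u"
    and z: "z \<in> closure (cyl Q' t1 t2)" "z \<notin> cyl Q' t1 t2"
  shows "Inf (u ` par_bdry Q' t1 t2) \<le> u z"
proof -
  let ?B = "Inf (u ` par_bdry Q' t1 t2)"
  have "compact (closure (cyl Q' t1 t2))"
    using bdd by (simp add: closure_cyl[OF tt] compact_Times compact_closure)
  then have "bdd_below (u ` closure (cyl Q' t1 t2))"
    using cont by (intro bounded_imp_bdd_below compact_imp_bounded compact_continuous_image)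
  then have B_le: "?B \<le> u w" if "w \<in> par_bdry Q' t1 t2" for w
    using that par_bdry_subset_closure_cyl[OF tt]
    by (intro cInf_lower imageI) (auto elim!: bdd_below_mono)
  obtain y s where ys: "z = (y,s)" "y \<in> closure Q'" "t1 \<le> s" "s \<le> t2"
    using z(1) by (auto simp: closure_cyl[OF tt])
  have frontier: "y \<in> frontier Q'" if "y \<notin> Q'"
    using that ys(2) interior_subset[of Q'] by (auto simp: frontier_def)
  show ?thesis
  proof (cases "s < t2")
    case True
    then have "z \<in> par_bdry Q' t1 t2"
      using z(2) ys frontier by (cases "y \<in> Q'") (auto simp: par_bdry_def cyl_def)
    then show ?thesis by (rule B_le)
  next
    case False
    with ys z(2) tt have "s = t2" "y \<notin> Q'" by (auto simp: cyl_def)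
    show ?thesis unfolding ys(1)
    proof (rule continuous_on_ge_from_the_past[OF cont z(1)[unfolded ys(1)]])
      show "t1 < s" using tt \<open>s = t2\<close> by simp
      fix s' assume "t1 < s'" "s' < s"
      then have "(y,s') \<in> par_bdry Q' t1 t2"
        using frontier[OF \<open>y \<notin> Q'\<close>] \<open>s = t2\<close> by (auto simp: par_bdry_def)
      then show "(y,s') \<in> closure (cyl Q' t1 t2) \<and> ?B \<le> u (y,s')"
        using B_le par_bdry_subset_closure_cyl[OF tt] by auto
    qed
  qed
qed

lemma par_subdiff_mon_env_if_touching:
  assumes z0: "(x0,t0) \<in> Q" "u (x0,t0) = p \<bullet> x0 + h"
    and below: "\<And>y s. (y,s) \<in> Q \<Longrightarrow> s \<le> t0 \<Longrightarrow> p \<bullet> y + h \<le> u (y,s)"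
  shows "(p,h) \<in> par_subdiff Q (x0,t0) (mon_env Q u)"
proof -
  define E where "E = (\<lambda>x t. {q \<bullet> x + k | q k. \<forall>y s. (y,s) \<in> Q \<longrightarrow> s \<le> t \<longrightarrow> q \<bullet> y + k \<le> u (y,s)})"
  have env: "mon_env Q u (x,t) = Sup (E x t)" for x t
    by (simp add: mon_env_def E_def)
  have plane_in_E: "p \<bullet> y + h \<in> E y s" if "s \<le> t0" for y s
    using below that by (force simp: E_def)
  have "mon_env Q u (x0,t0) = u (x0,t0)"
  proof -
    have "u (x0,t0) \<in> E x0 t0" using plane_in_E[of t0 x0] z0(2) by simp
    moreover have "v \<le> u (x0,t0)" if "v \<in> E x0 t0" for v
      using that z0(1) by (auto simp: E_def)
    ultimately show ?thesis unfolding env by (intro cSup_eq_maximum)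
  qed
  moreover have "p \<bullet> y + h \<le> mon_env Q u (y,s)" if "(y,s) \<in> Q" "s \<le> t0" for y s
    unfolding env using plane_in_E[OF that(2)] that(1)
    by (intro cSup_upper) (auto simp: E_def bdd_above_def)
  ultimately show ?thesis
    using z0 by (fastforce simp: par_subdiff_def)
qed

text \<open>The last hypothesis (Q contains a short time interval below each of its points) is what
  lets the earliest touching point also bound g from below at its own time slice.\<close>

lemma exists_first_touching_point:
  fixes g :: "'a::t2_space \<times> real \<Rightarrow> real"
  assumes K: "compact K" "Q \<subseteq> K" and cont: "continuous_on K g"
    and z0: "z0 \<in> Q" "g z0 \<le> h"
    and outside: "\<And>z. z \<in> K \<Longrightarrow> z \<notin> Q \<Longrightarrow> h < g z"
    and past: "\<And>y s. (y,s) \<in> Q \<Longrightarrow> \<exists>a<s. \<forall>s'. a < s' \<and> s' < s \<longrightarrow> (y,s') \<in> Q"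
  obtains x0 t0 where "(x0,t0) \<in> Q" "g (x0,t0) = h"
    "\<And>y s. (y,s) \<in> Q \<Longrightarrow> s \<le> t0 \<Longrightarrow> h \<le> g (y,s)"
proof -
  define S where "S = {z \<in> K. g z \<le> h}"
  have "closed S"
    unfolding S_def using cont K(1)
    by (intro continuous_on_closed_Collect_le continuous_intros) (auto intro: compact_imp_closed)
  then have "compact (S \<inter> K)"
    using K(1) by (rule closed_Int_compact)
  moreover have "S \<inter> K = S"
    by (auto simp: S_def)
  ultimately have "compact S"
    by simp
  moreover have "S \<noteq> {}"
    using z0 K(2) unfolding S_def by blast
  ultimately obtain x0 t0 where w: "(x0,t0) \<in> S" and earliest: "\<And>z. z \<in> S \<Longrightarrow> t0 \<le> snd z"
    using continuous_attains_inf[of S snd] by (force intro: continuous_intros)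
  have "(x0,t0) \<in> Q"
    using w outside by (force simp: S_def)
  have before: "h < g (y,s)" if "(y,s) \<in> Q" "s < t0" for y s
    using earliest[of "(y,s)"] that K(2) by (force simp: S_def)
  have above: "h \<le> g (y,s)" if ys: "(y,s) \<in> Q" "s \<le> t0" for y s
  proof (cases "s < t0")
    case True
    then show ?thesis using before[OF ys(1)] by simp
  next
    case False
    obtain a where "a < s" and a: "\<And>s'. a < s' \<Longrightarrow> s' < s \<Longrightarrow> (y,s') \<in> Q"
      using past[OF ys(1)] by blast
    show ?thesis
    proof (rule continuous_on_ge_from_the_past[OF cont _ \<open>a < s\<close>])
      show "(y,s) \<in> K" using ys(1) K(2) by blast
      fix s' assume "a < s'" "s' < s"
      then show "(y,s') \<in> K \<and> h \<le> g (y,s')"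
        using a before False ys(2) K(2) by (metis less_imp_le less_le_trans not_le subsetD)
    qed
  qed
  show ?thesis
    using that \<open>(x0,t0) \<in> Q\<close> above w by (force simp: S_def)
qed

definition half_open_cube :: "real^'n::finite \<Rightarrow> real \<Rightarrow> (real^'n) set" where
  "half_open_cube c r = {y. \<forall>i. c$i - r/2 \<le> y$i \<and> y$i < c$i + r/2}"

lemma Gsp_eq_half_open_cube: "Gsp n x = half_open_cube (Gcenter n x) (3 powi n)"
proof -
  have "(- (1/2) * r \<le> y - c \<and> y - c < (1/2) * r) \<longleftrightarrow> (c - r/2 \<le> y \<and> y < c + r/2)"
    for y c r :: real
    by auto
  then show ?thesis
    by (simp add: Gsp_def half_open_cube_def)
qed

lemma half_open_cube_between_boxes:
  "box (\<chi> i. c$i - r/2) (\<chi> i. c$i + r/2) \<subseteq> half_open_cube c r"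
  "half_open_cube c r \<subseteq> cbox (\<chi> i. c$i - r/2) (\<chi> i. c$i + r/2)"
  by (auto simp: half_open_cube_def mem_box_cart less_imp_le)

lemma closure_half_open_cube:
  assumes "0 < r"
  shows "closure (half_open_cube c r) = cbox (\<chi> i. c$i - r/2) (\<chi> i. c$i + r/2)"
proof
  show "closure (half_open_cube c r) \<subseteq> cbox (\<chi> i. c$i - r/2) (\<chi> i. c$i + r/2)"
    using half_open_cube_between_boxes(2) by (rule closure_minimal) (rule closed_cbox)
  have "c \<in> box (\<chi> i. c$i - r/2) (\<chi> i. c$i + r/2)"
    using assms by (simp add: mem_box_cart)
  then show "cbox (\<chi> i. c$i - r/2) (\<chi> i. c$i + r/2) \<subseteq> closure (half_open_cube c r)"
    using closure_mono[OF half_open_cube_between_boxes(1)] closure_box by (metis empty_iff)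
qed

lemma bounded_half_open_cube: "bounded (half_open_cube c r)"
  using half_open_cube_between_boxes(2) bounded_cbox by (rule bounded_subset[rotated])

lemma half_open_cube_borel:
  fixes c :: "real^'n::finite"
  shows "half_open_cube c r \<in> sets borel"
proof -
  have "half_open_cube c r = (\<Inter>i. {y. c$i - r/2 \<le> y$i}) \<inter> (\<Inter>i. {y. y$i < c$i + r/2})"
    by (auto simp: half_open_cube_def)
  also have "\<dots> \<in> sets borel"
    by (intro sets.Int borel_closed borel_open closed_INT open_INT finite ballI
        closed_Collect_le open_Collect_less continuous_intros)
  finally show ?thesis .
qed

lemma emeasure_lborel_box_cart_cube:
  fixes a b :: "real^'n::finite"
  assumes "\<And>i. b$i - a$i = r" "0 \<le> r"
  shows "emeasure lborel (box a b) = ennreal (r ^ CARD('n))"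
    and "emeasure lborel (cbox a b) = ennreal (r ^ CARD('n))"
proof -
  have le: "\<forall>x\<in>Basis. a \<bullet> x \<le> b \<bullet> x"
    using assms by (auto simp: Basis_vec_def inner_axis) (metis diff_ge_0_iff_ge)
  have "(\<Prod>x\<in>Basis. (b - a) \<bullet> x) = (\<Prod>x\<in>(Basis::(real^'n) set). r)"
    using assms by (intro prod.cong) (auto simp: Basis_vec_def inner_axis)
  also have "\<dots> = r ^ CARD('n)"
    by simp
  finally have "(\<Prod>x\<in>Basis. (b - a) \<bullet> x) = r ^ CARD('n)" .
  with le show "emeasure lborel (box a b) = ennreal (r ^ CARD('n))"
    and "emeasure lborel (cbox a b) = ennreal (r ^ CARD('n))"
    by (simp_all add: emeasure_lborel_box_eq emeasure_lborel_cbox_eq)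
qed

lemma emeasure_lborel_half_open_cube:
  fixes c :: "real^'n::finite"
  assumes "0 \<le> r"
  shows "emeasure lborel (half_open_cube c r) = ennreal (r ^ CARD('n))"
proof (rule antisym)
  have sides: "(\<chi> i. c$i + r/2) $ i - (\<chi> i. c$i - r/2) $ i = r" for i :: 'n
    by simp
  show "emeasure lborel (half_open_cube c r) \<le> ennreal (r ^ CARD('n))"
    using emeasure_mono[OF half_open_cube_between_boxes(2)[of c r], where M=lborel]
      emeasure_lborel_box_cart_cube(2)[OF sides assms] by simp
  show "ennreal (r ^ CARD('n)) \<le> emeasure lborel (half_open_cube c r)"
    using emeasure_mono[OF half_open_cube_between_boxes(1)[of c r], where M=lborel] half_open_cube_borel[of c r]
      emeasure_lborel_box_cart_cube(1)[OF sides assms] by simp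
qed

lemma emeasure_lborel_Times:
  fixes A :: "'a::euclidean_space set" and B :: "'b::euclidean_space set"
  assumes "A \<in> sets borel" "B \<in> sets borel"
  shows "emeasure lborel (A \<times> B) = emeasure lborel A * emeasure lborel B"
  using assms by (simp add: lborel_prod[symmetric] lborel.emeasure_pair_measure_Times)

lemma measure_cyl_half_open_cube:
  fixes c :: "real^'n::finite"
  assumes "0 \<le> r" "t1 \<le> t2"
  shows "measure lebesgue (cyl (half_open_cube c r) t1 t2) = r ^ CARD('n) * (t2 - t1)"
proof -
  have borel: "cyl (half_open_cube c r) t1 t2 \<in> sets borel"
    by (simp add: cyl_def half_open_cube_borel borel_Times)
  have "emeasure lborel (cyl (half_open_cube c r) t1 t2) = ennreal (r ^ CARD('n) * (t2 - t1))"
    using assms by (simp add: cyl_def emeasure_lborel_Times half_open_cube_borel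
        emeasure_lborel_half_open_cube ennreal_mult)
  then show ?thesis
    using borel assms by (simp add: measure_def)
qed

lemma enn2ereal_emeasure_le_leb_outer:
  assumes "A \<in> sets borel" "A \<subseteq> S"
  shows "enn2ereal (emeasure lborel A) \<le> leb_outer S"
proof -
  have "emeasure lborel A \<le> (INF T\<in>{T \<in> sets lebesgue. S \<subseteq> T}. emeasure lebesgue T)"
  proof (rule INF_greatest)
    fix T assume "T \<in> {T \<in> sets lebesgue. S \<subseteq> T}"
    then show "emeasure lborel A \<le> emeasure lebesgue T"
      using assms emeasure_mono[of A T lebesgue] by auto
  qed
  then show ?thesis
    unfolding leb_outer_def by (simp add: less_eq_ennreal.rep_eq)
qed

lemma slab_borel:
  fixes c :: "real^'n::finite" and P :: "(real^'n) set"
  assumes P: "P \<in> sets borel"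
  shows "{(p,h). p \<in> P \<and> lo < h + p \<bullet> c \<and> h + p \<bullet> c < hi} \<in> sets borel"
proof -
  have "{(p,h). p \<in> P \<and> lo < h + p \<bullet> c \<and> h + p \<bullet> c < hi}
      = (P \<times> UNIV) \<inter> {z. lo < snd z + fst z \<bullet> c} \<inter> {z. snd z + fst z \<bullet> c < hi}"
    by auto
  also have "\<dots> \<in> sets borel"
    using P by (intro sets.Int borel_Times[OF P] borel_open open_Collect_less continuous_intros) auto
  finally show ?thesis .
qed

lemma emeasure_lborel_slab:
  fixes c :: "real^'n::finite" and P :: "(real^'n) set"
  assumes P: "P \<in> sets borel" and "lo \<le> hi"
  shows "emeasure lborel {(p,h). p \<in> P \<and> lo < h + p \<bullet> c \<and> h + p \<bullet> c < hi}
     = ennreal (hi - lo) * emeasure lborel P"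
proof -
  define A where "A = {(p,h). p \<in> P \<and> lo < h + p \<bullet> c \<and> h + p \<bullet> c < hi}"
  have "A \<in> sets borel"
    unfolding A_def by (rule slab_borel[OF P])
  then have A: "A \<in> sets (lborel \<Otimes>\<^sub>M lborel)"
    by (simp only: lborel_prod sets_lborel)
  have slice: "Pair p -` A = (if p \<in> P then {lo - p \<bullet> c <..< hi - p \<bullet> c} else {})" for p
    by (auto simp: A_def algebra_simps)
  have "emeasure lborel A = (\<integral>\<^sup>+p. emeasure lborel (Pair p -` A) \<partial>lborel)"
    using lborel.emeasure_pair_measure_alt[OF A] by (simp add: lborel_prod)
  also have "\<dots> = (\<integral>\<^sup>+p. ennreal (hi - lo) * indicator P p \<partial>lborel)"
    using assms(2) by (intro nn_integral_cong) (auto simp: slice)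
  also have "\<dots> = ennreal (hi - lo) * emeasure lborel P"
    using P by (intro nn_integral_cmult_indicator) simp
  finally show ?thesis unfolding A_def .
qed

lemma abs_inner_le_card_mult:
  fixes p v :: "real^'n::finite"
  assumes "\<And>i. \<bar>p$i\<bar> \<le> \<delta>" and "\<And>i. \<bar>v$i\<bar> \<le> \<rho>"
  shows "\<bar>p \<bullet> v\<bar> \<le> real CARD('n) * \<delta> * \<rho>"
proof -
  have "\<bar>p \<bullet> v\<bar> = \<bar>\<Sum>i\<in>UNIV. p$i * v$i\<bar>"
    by (simp add: inner_vec_def)
  also have "\<dots> \<le> (\<Sum>i\<in>UNIV. \<bar>p$i * v$i\<bar>)"
    by (rule sum_abs)
  also have "\<dots> \<le> (\<Sum>i\<in>(UNIV::'n set). \<delta> * \<rho>)"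
  proof (rule sum_mono)
    fix i
    have "\<bar>p$i\<bar> * \<bar>v$i\<bar> \<le> \<delta> * \<rho>"
      using assms[of i] by (intro mult_mono) (auto intro: order_trans[OF abs_ge_zero])
    then show "\<bar>p$i * v$i\<bar> \<le> \<delta> * \<rho>"
      by (simp add: abs_mult)
  qed
  finally show ?thesis by simp
qed

lemma slab_subset_par_subdiff_mon_env:
  fixes u :: "(real^'n::finite) \<times> real \<Rightarrow> real" and c :: "real^'n" and r t1 t2 :: real
  assumes Q_def: "Q = cyl (half_open_cube c r) t1 t2" and m_def: "m = Inf (u ` Q)"
    and M_def: "M = Inf (u ` par_bdry (half_open_cube c r) t1 t2) - m"
    and \<delta>_def: "\<delta> = M / (4 * CARD('n) * r)"
    and r: "0 < r" and tt: "t1 < t2" and cont: "continuous_on (closure Q) u" and M: "0 < M"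
  shows "{(p,h). p \<in> box (\<chi> i. -\<delta>) (\<chi> i. \<delta>) \<and> m + M/4 < h + p \<bullet> c \<and> h + p \<bullet> c < m + M/2}
           \<subseteq> par_subdiff_set Q Q (mon_env Q u)"
proof clarify
  fix p h assume p: "p \<in> box (\<chi> i. -\<delta>) (\<chi> i. \<delta>)" and h: "m + M/4 < h + p \<bullet> c" "h + p \<bullet> c < m + M/2"
  have closure_Q: "closure Q = cbox (\<chi> i. c$i - r/2) (\<chi> i. c$i + r/2) \<times> {t1..t2}"
    unfolding Q_def closure_cyl[OF tt] closure_half_open_cube[OF r] ..
  have tilt_small: "\<bar>p \<bullet> (fst z - c)\<bar> \<le> M/8" if "z \<in> closure Q" for z
  proof -
    have "\<bar>p \<bullet> (fst z - c)\<bar> \<le> real CARD('n) * \<delta> * (r/2)"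
    proof (rule abs_inner_le_card_mult)
      fix i
      show "\<bar>p$i\<bar> \<le> \<delta>"
        using p by (auto simp: mem_box_cart abs_le_iff dest!: spec[of _ i])
      show "\<bar>(fst z - c)$i\<bar> \<le> r/2"
        using that by (auto simp: closure_Q mem_box_cart dest!: spec[of _ i] split: abs_split)
    qed
    also have "\<dots> = M/8"
      using r by (simp add: \<delta>_def)
    finally show ?thesis .
  qed
  have "compact (closure Q)"
    by (simp add: closure_Q compact_Times)
  then have "bdd_below (u ` Q)"
    using cont closure_subset[of Q]
    by (meson bdd_below_mono bounded_imp_bdd_below compact_continuous_image compact_imp_bounded image_mono)
  moreover have "(c,t2) \<in> Q"
    using r tt by (simp add: Q_def cyl_def half_open_cube_def)
  ultimately obtain z0 where z0: "z0 \<in> Q" "u z0 < m + M/8"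
    using cInf_lessD[of "u ` Q" "m + M/8"] M unfolding m_def by fastforce
  obtain x0 t0 where touch: "(x0,t0) \<in> Q" "u (x0,t0) - p \<bullet> (x0 - c) = h + p \<bullet> c"
    and below: "\<And>y s. (y,s) \<in> Q \<Longrightarrow> s \<le> t0 \<Longrightarrow> h + p \<bullet> c \<le> u (y,s) - p \<bullet> (y - c)"
  proof (rule exists_first_touching_point[of "closure Q" Q "\<lambda>z. u z - p \<bullet> (fst z - c)"])
    show "compact (closure Q)" "Q \<subseteq> closure Q" by fact (rule closure_subset)
    show "continuous_on (closure Q) (\<lambda>z. u z - p \<bullet> (fst z - c))"
      by (intro continuous_intros cont)
    show "z0 \<in> Q" "u z0 - p \<bullet> (fst z0 - c) \<le> h + p \<bullet> c"
      using z0 h tilt_small[of z0] closure_subset[of Q] by auto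
    fix z assume "z \<in> closure Q" "z \<notin> Q"
    then have "Inf (u ` par_bdry (half_open_cube c r) t1 t2) \<le> u z"
      using cont unfolding Q_def by (intro Inf_par_bdry_le_off_cyl bounded_half_open_cube tt)
    then show "h + p \<bullet> c < u z - p \<bullet> (fst z - c)"
      using abs_le_D1[OF tilt_small[OF \<open>z \<in> closure Q\<close>]] h M M_def m_def by linarith
  next
    fix y s assume "(y,s) \<in> Q"
    then show "\<exists>a<s. \<forall>s'. a < s' \<and> s' < s \<longrightarrow> (y,s') \<in> Q"
      by (auto simp: Q_def cyl_def)
  qed (auto simp: inner_diff_right)
  have "u (x0,t0) = p \<bullet> x0 + h"
    using touch(2) by (simp add: inner_diff_right)
  moreover have "p \<bullet> y + h \<le> u (y,s)" if "(y,s) \<in> Q" "s \<le> t0" for y s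
    using below[OF that] by (simp add: inner_diff_right)
  ultimately have "(p,h) \<in> par_subdiff Q (x0,t0) (mon_env Q u)"
    by (rule par_subdiff_mon_env_if_touching[OF touch(1)])
  then show "(p,h) \<in> par_subdiff_set Q Q (mon_env Q u)"
    using touch(1) by (auto simp: par_subdiff_set_def)
qed

lemma leb_outer_par_subdiff_mon_env_ge:
  fixes u :: "(real^'n::finite) \<times> real \<Rightarrow> real" and c :: "real^'n" and r t1 t2 :: real
  assumes Q_def: "Q = cyl (half_open_cube c r) t1 t2"
    and M_def: "M = Inf (u ` par_bdry (half_open_cube c r) t1 t2) - Inf (u ` Q)"
    and r: "0 < r" and tt: "t1 < t2" and cont: "continuous_on (closure Q) u" and M: "0 < M"
  shows "ereal (M ^ (CARD('n) + 1) / (4 * (2 * real CARD('n)) ^ CARD('n) * r ^ CARD('n)))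
           \<le> leb_outer (par_subdiff_set Q Q (mon_env Q u))"
proof -
  define m where "m = Inf (u ` Q)"
  define \<delta> where "\<delta> = M / (4 * CARD('n) * r)"
  define P :: "(real^'n) set" where "P = box (\<chi> i. -\<delta>) (\<chi> i. \<delta>)"
  define A where "A = {(p,h). p \<in> P \<and> m + M/4 < h + p \<bullet> c \<and> h + p \<bullet> c < m + M/2}"
  have "0 < \<delta>"
    using M r by (simp add: \<delta>_def)
  have P: "P \<in> sets borel"
    by (simp add: P_def)
  have "emeasure lborel A = ennreal (M/4) * emeasure lborel P"
    unfolding A_def using M by (subst emeasure_lborel_slab[OF P]) auto
  also have "emeasure lborel P = ennreal ((2*\<delta>) ^ CARD('n))"
    unfolding P_def using \<open>0 < \<delta>\<close> by (intro emeasure_lborel_box_cart_cube(1)) auto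
  finally have "enn2ereal (emeasure lborel A) = ereal (M/4 * (2*\<delta>) ^ CARD('n))"
    using M \<open>0 < \<delta>\<close> by (simp add: ennreal_mult[symmetric])
  also have "(2*\<delta>) ^ CARD('n) = M ^ CARD('n) / ((2 * real CARD('n)) ^ CARD('n) * r ^ CARD('n))"
    by (simp add: \<delta>_def power_divide power_mult_distrib)
  also have "M/4 * \<dots> = M ^ (CARD('n) + 1) / (4 * (2 * real CARD('n)) ^ CARD('n) * r ^ CARD('n))"
    by simp
  finally have measure_A: "enn2ereal (emeasure lborel A)
      = ereal (M ^ (CARD('n) + 1) / (4 * (2 * real CARD('n)) ^ CARD('n) * r ^ CARD('n)))" .
  have "enn2ereal (emeasure lborel A) \<le> leb_outer (par_subdiff_set Q Q (mon_env Q u))"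
  proof (rule enn2ereal_emeasure_le_leb_outer)
    show "A \<in> sets borel"
      unfolding A_def by (rule slab_borel[OF P])
    have "M = Inf (u ` par_bdry (half_open_cube c r) t1 t2) - m"
      by (simp add: M_def m_def)
    from slab_subset_par_subdiff_mon_env[OF Q_def m_def this \<delta>_def r tt cont M]
    show "A \<subseteq> par_subdiff_set Q Q (mon_env Q u)"
      by (simp add: A_def P_def)
  qed
  then show ?thesis
    by (simp only: measure_A)
qed

lemma leb_outer_nonneg: "0 \<le> leb_outer S"
  by (simp add: leb_outer_def)

lemma leb_outer_par_subdiff_mon_env_le_mu:
  assumes "u \<in> Ssup Q F" "0 < measure lebesgue Q"
  shows "ereal (1 / measure lebesgue Q) * leb_outer (par_subdiff_set Q Q (mon_env Q u)) \<le> mu Q F"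
  unfolding mu_def using assms by (intro ereal_mult_left_mono SUP_upper) auto

lemma le_powr_root_if_power_le:
  fixes M K R \<mu> :: real and k :: nat
  assumes M: "0 \<le> M" and K: "0 < K" and R: "0 < R" and le: "M ^ (k+1) \<le> K * R ^ (k+1) * \<mu>"
  shows "M \<le> K powr (1 / real (k+1)) * R * \<mu> powr (1 / real (k+1))"
proof -
  define e where "e = 1 / real (k+1)"
  have root: "(x ^ (k+1)) powr e = x" if "0 \<le> x" for x :: real
  proof (cases "x = 0")
    case False
    with that have "x ^ (k+1) = x powr real (k+1)"
      by (simp only: powr_realpow)
    moreover have "(x powr real (k+1)) powr e = x"
      using that False by (simp add: e_def powr_powr del: of_nat_Suc)
    ultimately show ?thesis by simp
  qed (simp add: e_def)
  have "0 \<le> K * R ^ (k+1) * \<mu>"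
    using le M by (meson order_trans zero_le_power)
  moreover have "0 < K * R ^ (k+1)"
    using K R by simp
  ultimately have "0 \<le> \<mu>"
    by (simp add: zero_le_mult_iff)
  have "M = (M ^ (k+1)) powr e"
    using root[OF M] by (rule sym)
  also have "\<dots> \<le> (K * R ^ (k+1) * \<mu>) powr e"
    using le M by (intro powr_mono2) (auto simp: e_def)
  also have "\<dots> = K powr e * (R ^ (k+1)) powr e * \<mu> powr e"
    using K R \<open>0 \<le> \<mu>\<close> by (simp add: powr_mult)
  also have "(R ^ (k+1)) powr e = R"
    using R by (intro root) simp
  finally show ?thesis
    by (simp add: e_def)
qed

lemma mu_nonneg:
  assumes "u \<in> Ssup Q F" "0 < measure lebesgue Q"
  shows "0 \<le> mu Q F"
proof -
  have "0 \<le> ereal (1 / measure lebesgue Q) * leb_outer (par_subdiff_set Q Q (mon_env Q u))"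
    using assms(2) leb_outer_nonneg by (intro ereal_0_le_mult) simp_all
  also have "\<dots> \<le> mu Q F"
    using assms by (rule leb_outer_par_subdiff_mon_env_le_mu)
  finally show ?thesis .
qed

lemma gap_power_le_mu:
  fixes u :: "(real^'n::finite) \<times> real \<Rightarrow> real" and c :: "real^'n" and r t :: real
  assumes Q_def: "Q = cyl (half_open_cube c r) t (t + r^2)"
    and M_def: "M = Inf (u ` par_bdry (half_open_cube c r) t (t + r^2)) - Inf (u ` Q)"
    and r: "0 < r" and u: "u \<in> Ssup Q F" and \<mu>: "mu Q F = ereal \<mu>" and M: "0 < M"
  shows "M ^ (CARD('n) + 1) \<le> 4 * (2 * real CARD('n)) ^ CARD('n) * (r^2) ^ (CARD('n) + 1) * \<mu>"
proof -
  define d where "d = CARD('n)"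
  define K where "K = 4 * (2 * real d) ^ d"
  define L where "L = leb_outer (par_subdiff_set Q Q (mon_env Q u))"
  have "0 < K"
    by (simp add: K_def d_def)
  have "continuous_on (closure Q) u"
    using u by (simp add: Ssup_def)
  then have "ereal (M ^ (d + 1) / (K * r ^ d)) \<le> L"
    using leb_outer_par_subdiff_mon_env_ge[OF Q_def M_def r] M r by (simp add: K_def L_def d_def)
  then have "ereal (1 / (r ^ d * r^2)) * ereal (M ^ (d + 1) / (K * r ^ d)) \<le> ereal (1 / (r ^ d * r^2)) * L"
    using r by (intro ereal_mult_left_mono) simp_all
  also have "\<dots> \<le> ereal \<mu>"
  proof -
    have "measure lebesgue Q = r ^ d * r^2"
      using r by (simp add: Q_def d_def measure_cyl_half_open_cube)
    then show ?thesis
      using leb_outer_par_subdiff_mon_env_le_mu[OF u] r by (simp add: L_def \<mu>)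
  qed
  finally have scaled: "1 / (r ^ d * r^2) * (M ^ (d + 1) / (K * r ^ d)) \<le> \<mu>"
    by simp
  have "(r^2) ^ (d + 1) = r ^ d * r^2 * r ^ d"
    by (simp add: power_mult[symmetric] power_add[symmetric] mult_2)
  then have "1 / (r ^ d * r^2) * (M ^ (d + 1) / (K * r ^ d)) = M ^ (d + 1) / (K * (r^2) ^ (d + 1))"
    by (simp only:) (simp add: mult_ac)
  with scaled have "M ^ (d + 1) / (K * (r^2) ^ (d + 1)) \<le> \<mu>"
    by (simp only:)
  moreover have "0 < K * (r^2) ^ (d + 1)"
    using \<open>0 < K\<close> r by simp
  ultimately show ?thesis
    by (simp add: pos_divide_le_eq mult_ac K_def d_def)
qed

lemma Inf_par_bdry_le_Inf_cyl_add_mu: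
  fixes u :: "(real^'n::finite) \<times> real \<Rightarrow> real" and c :: "real^'n" and r t :: real
  assumes Q_def: "Q = cyl (half_open_cube c r) t (t + r^2)"
    and r: "0 < r" and u: "u \<in> Ssup Q F" and finite: "mu Q F \<noteq> \<infinity>"
  shows "Inf (u ` par_bdry (half_open_cube c r) t (t + r^2)) \<le> Inf (u ` Q)
           + (4 * (2 * real CARD('n)) ^ CARD('n)) powr (1 / real (CARD('n) + 1))
             * r^2 * real_of_ereal (mu Q F) powr (1 / real (CARD('n) + 1))"
proof -
  define M where "M = Inf (u ` par_bdry (half_open_cube c r) t (t + r^2)) - Inf (u ` Q)"
  have "0 \<le> mu Q F"
    using u r by (intro mu_nonneg) (simp_all add: Q_def measure_cyl_half_open_cube)
  then obtain \<mu> where \<mu>: "mu Q F = ereal \<mu>"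
    using finite by (cases "mu Q F") auto
  have "M \<le> (4 * (2 * real CARD('n)) ^ CARD('n)) powr (1 / real (CARD('n) + 1))
             * r^2 * \<mu> powr (1 / real (CARD('n) + 1))"
  proof (cases "0 < M")
    case True
    then show ?thesis
      using gap_power_le_mu[OF Q_def M_def r u \<mu>] r by (intro le_powr_root_if_power_le) simp_all
  next
    case False
    moreover have "0 \<le> (4 * (2 * real CARD('n)) ^ CARD('n)) powr (1 / real (CARD('n) + 1))
                     * r^2 * \<mu> powr (1 / real (CARD('n) + 1))"
      by simp
    ultimately show ?thesis
      by linarith
  qed
  then show ?thesis
    by (simp add: \<mu> M_def)
qed

theorem lemma2p1:
  "\<exists>C::real. \<forall>(lam::real) Lam (F::'n::finite coeff) (z::(real^'n) \<times> real) (n::int) u.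
     0 < lam \<longrightarrow> lam \<le> Lam \<longrightarrow> F \<in> Omega lam Lam \<longrightarrow> u \<in> Ssup (Gcyl n z) F \<longrightarrow>
     ereal (Inf (u ` Gpar_bdry n z)) \<le> ereal (Inf (u ` Gcyl n z))
       + (if mu (Gcyl n z) F = \<infinity> then \<infinity>
          else ereal (C * 3 powi (2*n) * real_of_ereal (mu (Gcyl n z) F) powr (1 / real (CARD('n) + 1))))"
proof (intro exI allI impI)
  fix lam Lam :: real and F :: "'n coeff" and z :: "(real^'n) \<times> real" and n :: int and u
  assume u: "u \<in> Ssup (Gcyl n z) F"
  obtain x t where z: "z = (x,t)"
    by force
  define r :: real where "r = 3 powi n"
  have r: "0 < r" and r2: "3 powi (2*n) = r^2"
    by (simp_all add: r_def power_int_power' mult.commute)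
  have Gcyl: "Gcyl n z = cyl (half_open_cube (Gcenter n x) r) (Gtime n t) (Gtime n t + r^2)"
    and Gpar_bdry: "Gpar_bdry n z = par_bdry (half_open_cube (Gcenter n x) r) (Gtime n t) (Gtime n t + r^2)"
    by (simp_all add: Gcyl_def Gpar_bdry_def z r_def r2 Gsp_eq_half_open_cube)
  show "ereal (Inf (u ` Gpar_bdry n z)) \<le> ereal (Inf (u ` Gcyl n z))
       + (if mu (Gcyl n z) F = \<infinity> then \<infinity>
          else ereal ((4 * (2 * real CARD('n)) ^ CARD('n)) powr (1 / real (CARD('n) + 1))
                 * 3 powi (2*n) * real_of_ereal (mu (Gcyl n z) F) powr (1 / real (CARD('n) + 1))))"
    using Inf_par_bdry_le_Inf_cyl_add_mu[OF Gcyl r u] by (simp add: Gpar_bdry r2)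
qed

end
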